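(* Let $R=(\mathcal{F},\mathcal{V},\mathcal{R})$ with $\mathcal{R}=\{\ell_1\to r_1,\dots,\ell_n\to r_n\}$ and $R'=(\mathcal{F}',\mathcal{V}',\mathcal{R}')$ be TRSs with $R\cong_{\mathbf{SVE}}R'$, $R\cong_{\mathbf{LFE}}R'$ or $R\cong_{\mathbf{LE}}R'$, witnessed by the local isomorphism $\phi=(\phi_1,\dots,\phi_n)$, so $\mathcal{R}'=\{\phi_1(\ell_1)\to\phi_1(r_1),\dots,\phi_n(\ell_n)\to\phi_n(r_n)\}$. Then: (i) If $s\to_R t$ for $s,t\in T(\mathcal{F},\mathcal{V})$, then there is $1\le i\le n$ with $\phi_i(s)\to_{R'}\phi_i(t)$. However, there exist TRSs $R,R'$ with $R\cong_{\mathbf{LFE}}R'$ (hence also $R\cong_{\mathbf{SVE}}R'$ and $R\cong_{\mathbf{LE}}R'$), a witnessing family $\phi$, terms $s,t$ and an index $i$ such that $s\to_R t$ but not $\phi_i(s)\to_{R'}\phi_i(t)$. (ii) If $\phi_i(s)\to_{\{\phi_i(\ell_i)\to\phi_i(r_i)\}}\phi_i(t)$ for some $i$ and $s,t\in T(\mathcal{F},\mathcal{V})$, then $s\to_R t$. However, there exist TRSs $R,R'$ with $R\cong_{\mathbf{LFE}}R'$, a witnessing family $\phi$, terms $s,t$ and an index $j$ such that $\phi_j(s)\to_{R'}\phi_j(t)$ but not $s\to_R t$. (iii) There exist TRSs $R,R'$ with $R\cong_{\mathbf{LFE}}R'$ such that $R$ is terminating but $R'$ is not terminating.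
   Context: Terms and TRSs: $\mathcal{F}$ is a finite set of function symbols with arity map $\mathrm{ar}:\mathcal{F}\to\mathbb{N}_0$, $\mathcal{V}$ a finite set of variables disjoint from $\mathcal{F}$, and $T(\mathcal{F},\mathcal{V})$ the usual set of first-order terms over them. $\mathrm{Var}(t)$ is the set of variables occurring in $t$. A term rewriting system (TRS) is a triple $R=(\mathcal{F},\mathcal{V},\mathcal{R})$ where $\mathcal{R}$ is a finite set of rules $\ell\to r$ with $\ell,r\in T(\mathcal{F},\mathcal{V})$, $\ell\notin\mathcal{V}$ and $\mathrm{Var}(r)\subseteq\mathrm{Var}(\ell)$; $\mathcal{F}$ and $\mathcal{V}$ contain all symbols occurring in the rules. Rewriting: $s\to_R t$ iff there are a context $C$ (a term over $\mathcal{F},\mathcal{V}$ with one hole), a rule $\ell\to r\in\mathcal{R}$ and a substitution $\sigma:\mathcal{V}\to T(\mathcal{F},\mathcal{V})$ with $s=C[\sigma(\ell)]$ and $t=C[\sigma(r)]$; for a single rule set $\{\ell\to r\}$ the relation $\to_{\{\ell\to r\}}$ is defined likewise. $R$ is terminating if there is no infinite sequence of $\to_R$-steps. Term isomorphisms: a term isomorphism $\phi:T(\mathcal{F},\mathcal{V})\to T(\mathcal{F}',\mathcal{V}')$ is a pair of bijections $\phi_{\mathcal{F}}:\mathcal{F}\to\mathcal{F}'$ with $\mathrm{ar}'(\phi_{\mathcal{F}}(f))=\mathrm{ar}(f)$ for all $f$, and $\phi_{\mathcal{V}}:\mathcal{V}\to\mathcal{V}'$, extended homomorphically to terms. We write $\phi|_{\mathcal{F}}=\phi_{\mathcal{F}}$,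 $\phi|_{\mathcal{V}}=\phi_{\mathcal{V}}$. It is $\mathcal{V}$-invariant if $\mathcal{V}=\mathcal{V}'$ and $\phi_{\mathcal{V}}=\mathrm{id}$. Normal forms: two distinct rules $\ell\to r$, $\ell'\to r'$ of $\mathcal{R}$ are equivalent (resp. $\mathcal{F}$-equivalent) if there is a term isomorphism (resp. a $\mathcal{V}$-invariant one) $\phi:T(\mathcal{F},\mathcal{V})\to T(\mathcal{F},\mathcal{V})$ with $\phi(\ell)=\ell'$ and $\phi(r)=r'$. $R$ is in normal form (resp. $\mathcal{F}$-normal form) if $\mathcal{R}$ contains no pair of equivalent (resp. $\mathcal{F}$-equivalent) rules. TRS isomorphisms: a local isomorphism from $R$ to $R'$ is a family $(\phi_1,\dots,\phi_n)$ of term isomorphisms $T(\mathcal{F},\mathcal{V})\to T(\mathcal{F}',\mathcal{V}')$ with $\{\phi_i(\ell_i)\to\phi_i(r_i):1\le i\le n\}=\mathcal{R}'$. $R\cong_{\mathbf{LE}}R'$ if both are in normal form and a local isomorphism exists; $R\cong_{\mathbf{SVE}}R'$ if both are in $\mathcal{F}$-normal form and there is a local isomorphism with $\phi_1|_{\mathcal{V}}=\dots=\phi_n|_{\mathcal{V}}$; $R\cong_{\mathbf{LFE}}R'$ if both are in $\mathcal{F}$-normal form and there is a local isomorphism all of whose $\phi_i$ are $\mathcal{V}$-invariant. *)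

theory Defs
  imports Main
begin

datatype ('f, 'v) "term" = Var 'v | Fun 'f "('f, 'v) term list"

datatype ('f, 'v) ctxt =
  Hole | More 'f "('f, 'v) term list" "('f, 'v) ctxt" "('f, 'v) term list"

fun ctxt_apply :: "('f, 'v) ctxt \<Rightarrow> ('f, 'v) term \<Rightarrow> ('f, 'v) term" where
  "ctxt_apply Hole t = t"
| "ctxt_apply (More f ss C ts) t = Fun f (ss @ ctxt_apply C t # ts)"

fun subst_apply :: "('v \<Rightarrow> ('f, 'v) term) \<Rightarrow> ('f, 'v) term \<Rightarrow> ('f, 'v) term" where
  "subst_apply \<sigma> (Var x) = \<sigma> x"
| "subst_apply \<sigma> (Fun f ts) = Fun f (map (subst_apply \<sigma>) ts)"

fun vars_term :: "('f, 'v) term \<Rightarrow> 'v set" where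
  "vars_term (Var x) = {x}"
| "vars_term (Fun f ts) = (\<Union>t\<in>set ts. vars_term t)"

text \<open>Membership in T(F,V): well-formed terms over a signature F with arity map ar and
  a variable set V.\<close>
fun wf_term :: "'f set \<Rightarrow> ('f \<Rightarrow> nat) \<Rightarrow> 'v set \<Rightarrow> ('f, 'v) term \<Rightarrow> bool" where
  "wf_term F ar V (Var x) = (x \<in> V)"
| "wf_term F ar V (Fun f ts) = (f \<in> F \<and> length ts = ar f \<and> (\<forall>t\<in>set ts. wf_term F ar V t))"

fun wf_ctxt :: "'f set \<Rightarrow> ('f \<Rightarrow> nat) \<Rightarrow> 'v set \<Rightarrow> ('f, 'v) ctxt \<Rightarrow> bool" where
  "wf_ctxt F ar V Hole = True"
| "wf_ctxt F ar V (More f ss C ts) =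
     (f \<in> F \<and> ar f = length ss + 1 + length ts \<and> (\<forall>t\<in>set ss. wf_term F ar V t)
      \<and> wf_ctxt F ar V C \<and> (\<forall>t\<in>set ts. wf_term F ar V t))"

text \<open>A TRS (F, V, R) together with the arity map: (F, ar, V, R).\<close>
type_synonym ('f, 'v) rule = "('f, 'v) term \<times> ('f, 'v) term"
type_synonym ('f, 'v) trs = "'f set \<times> ('f \<Rightarrow> nat) \<times> 'v set \<times> ('f, 'v) rule set"

definition funs :: "('f, 'v) trs \<Rightarrow> 'f set" where "funs R = fst R"
definition arity :: "('f, 'v) trs \<Rightarrow> 'f \<Rightarrow> nat" where "arity R = fst (snd R)"
definition vars :: "('f, 'v) trs \<Rightarrow> 'v set" where "vars R = fst (snd (snd R))"
definition rules :: "('f, 'v) trs \<Rightarrow> ('f, 'v) rule set" where "rules R = snd (snd (snd R))"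

definition is_trs :: "('f, 'v) trs \<Rightarrow> bool" where
  "is_trs R \<longleftrightarrow> finite (funs R) \<and> finite (vars R) \<and> finite (rules R) \<and>
     (\<forall>(l, r) \<in> rules R. wf_term (funs R) (arity R) (vars R) l \<and>
                         wf_term (funs R) (arity R) (vars R) r \<and>
                         (\<forall>x. l \<noteq> Var x) \<and> vars_term r \<subseteq> vars_term l)"

abbreviation in_terms :: "('f, 'v) term \<Rightarrow> ('f, 'v) trs \<Rightarrow> bool" where
  "in_terms t R \<equiv> wf_term (funs R) (arity R) (vars R) t"

definition rstep_rules ::
  "'f set \<Rightarrow> ('f \<Rightarrow> nat) \<Rightarrow> 'v set \<Rightarrow> ('f, 'v) rule set \<Rightarrow> ('f, 'v) term \<Rightarrow> ('f, 'v) term \<Rightarrow> bool" where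
  "rstep_rules F ar V Rs s t \<longleftrightarrow>
     (\<exists>C l r \<sigma>. wf_ctxt F ar V C \<and> (l, r) \<in> Rs \<and> (\<forall>x\<in>V. wf_term F ar V (\<sigma> x)) \<and>
        s = ctxt_apply C (subst_apply \<sigma> l) \<and> t = ctxt_apply C (subst_apply \<sigma> r))"

definition rstep :: "('f, 'v) trs \<Rightarrow> ('f, 'v) term \<Rightarrow> ('f, 'v) term \<Rightarrow> bool" where
  "rstep R s t \<longleftrightarrow> rstep_rules (funs R) (arity R) (vars R) (rules R) s t"

definition terminating :: "('f, 'v) trs \<Rightarrow> bool" where
  "terminating R \<longleftrightarrow> \<not> (\<exists>seq :: nat \<Rightarrow> ('f, 'v) term. \<forall>k. rstep R (seq k) (seq (Suc k)))"

text \<open>A term isomorphism T(F,V) -> T(F',V') is given by a pair (phiF, phiV) of bijections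
  phiF : F -> F' (arity preserving) and phiV : V -> V', extended homomorphically via map_term.\<close>
type_synonym ('f, 'v, 'g, 'w) tiso = "('f \<Rightarrow> 'g) \<times> ('v \<Rightarrow> 'w)"

definition term_iso ::
  "'f set \<Rightarrow> ('f \<Rightarrow> nat) \<Rightarrow> 'v set \<Rightarrow> 'g set \<Rightarrow> ('g \<Rightarrow> nat) \<Rightarrow> 'w set \<Rightarrow> ('f, 'v, 'g, 'w) tiso \<Rightarrow> bool" where
  "term_iso F ar V F' ar' V' \<phi> \<longleftrightarrow>
     bij_betw (fst \<phi>) F F' \<and> (\<forall>f\<in>F. ar' (fst \<phi> f) = ar f) \<and> bij_betw (snd \<phi>) V V'"

definition apply_iso :: "('f, 'v, 'g, 'w) tiso \<Rightarrow> ('f, 'v) term \<Rightarrow> ('g, 'w) term" where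
  "apply_iso \<phi> t = map_term (fst \<phi>) (snd \<phi>) t"

definition V_invariant :: "'v set \<Rightarrow> 'v set \<Rightarrow> ('f, 'v, 'g, 'v) tiso \<Rightarrow> bool" where
  "V_invariant V V' \<phi> \<longleftrightarrow> V = V' \<and> (\<forall>x\<in>V. snd \<phi> x = x)"

definition equivalent_rules :: "('f, 'v) trs \<Rightarrow> ('f, 'v) rule \<Rightarrow> ('f, 'v) rule \<Rightarrow> bool" where
  "equivalent_rules R \<rho> \<rho>' \<longleftrightarrow> \<rho> \<noteq> \<rho>' \<and>
     (\<exists>\<phi>. term_iso (funs R) (arity R) (vars R) (funs R) (arity R) (vars R) \<phi> \<and>
          apply_iso \<phi> (fst \<rho>) = fst \<rho>' \<and> apply_iso \<phi> (snd \<rho>) = snd \<rho>')"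

definition F_equivalent_rules :: "('f, 'v) trs \<Rightarrow> ('f, 'v) rule \<Rightarrow> ('f, 'v) rule \<Rightarrow> bool" where
  "F_equivalent_rules R \<rho> \<rho>' \<longleftrightarrow> \<rho> \<noteq> \<rho>' \<and>
     (\<exists>\<phi>. term_iso (funs R) (arity R) (vars R) (funs R) (arity R) (vars R) \<phi> \<and>
          V_invariant (vars R) (vars R) \<phi> \<and>
          apply_iso \<phi> (fst \<rho>) = fst \<rho>' \<and> apply_iso \<phi> (snd \<rho>) = snd \<rho>')"

definition normal_form :: "('f, 'v) trs \<Rightarrow> bool" where
  "normal_form R \<longleftrightarrow> \<not> (\<exists>\<rho>\<in>rules R. \<exists>\<rho>'\<in>rules R. equivalent_rules R \<rho> \<rho>')"

definition F_normal_form :: "('f, 'v) trs \<Rightarrow> bool" where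
  "F_normal_form R \<longleftrightarrow> \<not> (\<exists>\<rho>\<in>rules R. \<exists>\<rho>'\<in>rules R. F_equivalent_rules R \<rho> \<rho>')"

text \<open>rs enumerates the rules of R as l_1 -> r_1, ..., l_n -> r_n (rs ! (i-1) = (l_i, r_i));
  phis ! (i-1) is phi_i.\<close>
definition enumerates :: "('f, 'v) trs \<Rightarrow> ('f, 'v) rule list \<Rightarrow> bool" where
  "enumerates R rs \<longleftrightarrow> distinct rs \<and> set rs = rules R"

definition local_iso ::
  "('f, 'v) trs \<Rightarrow> ('g, 'w) trs \<Rightarrow> ('f, 'v) rule list \<Rightarrow> ('f, 'v, 'g, 'w) tiso list \<Rightarrow> bool" where
  "local_iso R R' rs phis \<longleftrightarrow> enumerates R rs \<and> length phis = length rs \<and>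
     (\<forall>i < length rs. term_iso (funs R) (arity R) (vars R) (funs R') (arity R') (vars R') (phis ! i)) \<and>
     {(apply_iso (phis ! i) (fst (rs ! i)), apply_iso (phis ! i) (snd (rs ! i))) | i. i < length rs}
       = rules R'"

definition iso_LE_via ::
  "('f, 'v) trs \<Rightarrow> ('g, 'w) trs \<Rightarrow> ('f, 'v) rule list \<Rightarrow> ('f, 'v, 'g, 'w) tiso list \<Rightarrow> bool" where
  "iso_LE_via R R' rs phis \<longleftrightarrow> normal_form R \<and> normal_form R' \<and> local_iso R R' rs phis"

definition iso_SVE_via ::
  "('f, 'v) trs \<Rightarrow> ('g, 'w) trs \<Rightarrow> ('f, 'v) rule list \<Rightarrow> ('f, 'v, 'g, 'w) tiso list \<Rightarrow> bool" where
  "iso_SVE_via R R' rs phis \<longleftrightarrow> F_normal_form R \<and> F_normal_form R' \<and> local_iso R R' rs phis \<and>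
     (\<forall>i < length phis. \<forall>j < length phis. \<forall>x \<in> vars R. snd (phis ! i) x = snd (phis ! j) x)"

definition iso_LFE_via ::
  "('f, 'v) trs \<Rightarrow> ('g, 'v) trs \<Rightarrow> ('f, 'v) rule list \<Rightarrow> ('f, 'v, 'g, 'v) tiso list \<Rightarrow> bool" where
  "iso_LFE_via R R' rs phis \<longleftrightarrow> F_normal_form R \<and> F_normal_form R' \<and> local_iso R R' rs phis \<and>
     (\<forall>i < length phis. V_invariant (vars R) (vars R') (phis ! i))"

definition iso_LFE :: "('f, 'v) trs \<Rightarrow> ('g, 'v) trs \<Rightarrow> bool" where
  "iso_LFE R R' \<longleftrightarrow> (\<exists>rs phis. iso_LFE_via R R' rs phis)"

definition transfer_i ::
  "('f, 'v) trs \<Rightarrow> ('g, 'w) trs \<Rightarrow> ('f, 'v) rule list \<Rightarrow> ('f, 'v, 'g, 'w) tiso list \<Rightarrow> bool" where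
  "transfer_i R R' rs phis \<longleftrightarrow>
     (\<forall>s t. in_terms s R \<longrightarrow> in_terms t R \<longrightarrow> rstep R s t \<longrightarrow>
        (\<exists>i < length rs. rstep R' (apply_iso (phis ! i) s) (apply_iso (phis ! i) t)))"

definition transfer_ii ::
  "('f, 'v) trs \<Rightarrow> ('g, 'w) trs \<Rightarrow> ('f, 'v) rule list \<Rightarrow> ('f, 'v, 'g, 'w) tiso list \<Rightarrow> bool" where
  "transfer_ii R R' rs phis \<longleftrightarrow>
     (\<forall>s t i. in_terms s R \<longrightarrow> in_terms t R \<longrightarrow> i < length rs \<longrightarrow>
        rstep_rules (funs R') (arity R') (vars R')
          {(apply_iso (phis ! i) (fst (rs ! i)), apply_iso (phis ! i) (snd (rs ! i)))}
          (apply_iso (phis ! i) s) (apply_iso (phis ! i) t)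
        \<longrightarrow> rstep R s t)"

end

theory Submission
  imports Defs
begin

text \<open>A term isomorphism commutes with contexts and substitutions and preserves well-formedness,
  so it maps a rewrite step with a rule \<open>l \<rightarrow> r\<close> to a step with the rule
  \<open>\<phi>(l) \<rightarrow> \<phi>(r)\<close>; applying this to \<open>\<phi>\<^sub>i\<close> and to its inverse gives the
  positive parts of (i) and (ii). The negative parts and (iii) are witnessed by
  \<open>R = {a \<rightarrow> f(b), a \<rightarrow> b}\<close> and \<open>R' = {a \<rightarrow> f(b), b \<rightarrow> a}\<close>, with
  \<open>\<phi>\<^sub>1 = id\<close> and \<open>\<phi>\<^sub>2\<close> the swap of \<open>a\<close> and \<open>b\<close>. The step \<open>a \<rightarrow> b\<close> of \<open>R\<close>
  is mirrored in \<open>R'\<close> only under \<open>\<phi>\<^sub>2\<close>, not under \<open>\<phi>\<^sub>1\<close>, and dually for \<open>b \<rightarrow> a\<close>.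
  \<open>R\<close> terminates since every step removes an \<open>a\<close>, while \<open>R'\<close> loops:
  \<open>b \<rightarrow> a \<rightarrow> f(b)\<close>.\<close>

lemma map_term_ctxt_apply:
  "map_term f g (ctxt_apply C t) = ctxt_apply (map_ctxt f g C) (map_term f g t)"
  by (induction C) auto

lemma vars_term_map_term: "vars_term (map_term f g t) = g ` vars_term t"
  by (induction t) auto

lemma vars_term_subset_if_wf_term: "wf_term F ar V t \<Longrightarrow> vars_term t \<subseteq> V"
  by (induction t) auto

lemma subst_apply_Var [simp]: "subst_apply Var t = t"
  by (induction t) (simp_all add: map_idI)

lemma subst_apply_map_term:
  "(\<And>x. x \<in> vars_term t \<Longrightarrow> \<tau> (g x) = map_term f g (\<sigma> x)) \<Longrightarrow>
   subst_apply \<tau> (map_term f g t) = map_term f g (subst_apply \<sigma> t)"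
  by (induction t) auto

lemma map_term_inv_into:
  "inj_on f F \<Longrightarrow> inj_on g V \<Longrightarrow> wf_term F ar V t \<Longrightarrow>
   map_term (inv_into F f) (inv_into V g) (map_term f g t) = t"
  by (induction t) (simp_all add: map_idI)

definition iso_inv :: "'f set \<Rightarrow> 'v set \<Rightarrow> ('f, 'v, 'g, 'w) tiso \<Rightarrow> ('g, 'w, 'f, 'v) tiso" where
  "iso_inv F V \<phi> = (inv_into F (fst \<phi>), inv_into V (snd \<phi>))"

lemma wf_term_apply_iso:
  "term_iso F ar V F' ar' V' \<phi> \<Longrightarrow> wf_term F ar V t \<Longrightarrow> wf_term F' ar' V' (apply_iso \<phi> t)"
  unfolding apply_iso_def term_iso_def by (induction t) (auto simp: bij_betw_apply)

lemma wf_ctxt_map_ctxt: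
  assumes "term_iso F ar V F' ar' V' \<phi>"
  shows "wf_ctxt F ar V C \<Longrightarrow> wf_ctxt F' ar' V' (map_ctxt (fst \<phi>) (snd \<phi>) C)"
  using assms wf_term_apply_iso[OF assms]
  by (induction C) (auto simp: term_iso_def bij_betw_apply apply_iso_def)

lemma vars_term_apply_iso_subset:
  "term_iso F ar V F' ar' V' \<phi> \<Longrightarrow> vars_term t \<subseteq> V \<Longrightarrow> vars_term (apply_iso \<phi> t) \<subseteq> V'"
  by (auto simp: apply_iso_def vars_term_map_term term_iso_def bij_betw_def)

lemma term_iso_iso_inv:
  assumes "term_iso F ar V F' ar' V' \<phi>"
  shows "term_iso F' ar' V' F ar V (iso_inv F V \<phi>)"
proof -
  have bf: "bij_betw (fst \<phi>) F F'" and ar: "\<forall>f\<in>F. ar' (fst \<phi> f) = ar f"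
    and bv: "bij_betw (snd \<phi>) V V'"
    using assms unfolding term_iso_def by auto
  have "ar (inv_into F (fst \<phi>) g) = ar' g" if "g \<in> F'" for g
    using ar bf that by (metis bij_betw_def inv_into_into f_inv_into_f)
  then show ?thesis
    using bf bv by (simp add: term_iso_def iso_inv_def bij_betw_inv_into)
qed

lemma apply_iso_inv_apply_iso:
  "term_iso F ar V F' ar' V' \<phi> \<Longrightarrow> wf_term F ar V t \<Longrightarrow>
   apply_iso (iso_inv F V \<phi>) (apply_iso \<phi> t) = t"
  by (simp add: apply_iso_def iso_inv_def term_iso_def bij_betw_def map_term_inv_into)

lemma rstep_rules_mono: "rstep_rules F ar V Rs s t \<Longrightarrow> Rs \<subseteq> Rs' \<Longrightarrow> rstep_rules F ar V Rs' s t"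
  unfolding rstep_rules_def by blast

lemma rstep_rules_rule_in_ctxt:
  "wf_ctxt F ar V C \<Longrightarrow> (l, r) \<in> Rs \<Longrightarrow> rstep_rules F ar V Rs (ctxt_apply C l) (ctxt_apply C r)"
  unfolding rstep_rules_def by (rule exI[of _ C], rule exI[of _ l], rule exI[of _ r], rule exI[of _ Var]) simp

lemma rstep_rules_apply_iso:
  assumes iso: "term_iso F ar V F' ar' V' \<phi>"
    and rules_vars: "\<forall>(l, r) \<in> Rs. vars_term l \<subseteq> V \<and> vars_term r \<subseteq> V"
    and step: "rstep_rules F ar V Rs s t"
  shows "rstep_rules F' ar' V' ((\<lambda>(l, r). (apply_iso \<phi> l, apply_iso \<phi> r)) ` Rs)
           (apply_iso \<phi> s) (apply_iso \<phi> t)"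
proof -
  obtain C l r \<sigma> where C: "wf_ctxt F ar V C" and lr: "(l, r) \<in> Rs"
    and \<sigma>: "\<forall>x\<in>V. wf_term F ar V (\<sigma> x)"
    and s: "s = ctxt_apply C (subst_apply \<sigma> l)" and t: "t = ctxt_apply C (subst_apply \<sigma> r)"
    using step unfolding rstep_rules_def by blast
  have bv: "bij_betw (snd \<phi>) V V'"
    using iso unfolding term_iso_def by blast
  define \<tau> where "\<tau> y = apply_iso \<phi> (\<sigma> (inv_into V (snd \<phi>) y))" for y
  have \<tau>_wf: "\<forall>y\<in>V'. wf_term F' ar' V' (\<tau> y)"
    using bv \<sigma> wf_term_apply_iso[OF iso] unfolding \<tau>_def by (metis bij_betw_def inv_into_into)
  have \<tau>_subst: "subst_apply \<tau> (apply_iso \<phi> u) = apply_iso \<phi> (subst_apply \<sigma> u)"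
    if "vars_term u \<subseteq> V" for u
    using that bv unfolding apply_iso_def \<tau>_def
    by (intro subst_apply_map_term) (auto simp: bij_betw_def)
  have "vars_term l \<subseteq> V" "vars_term r \<subseteq> V"
    using rules_vars lr by auto
  then show ?thesis
    unfolding rstep_rules_def s t
    using wf_ctxt_map_ctxt[OF iso C] lr \<tau>_wf \<tau>_subst
    by (intro exI[of _ "map_ctxt (fst \<phi>) (snd \<phi>) C"] exI[of _ "apply_iso \<phi> l"]
        exI[of _ "apply_iso \<phi> r"] exI[of _ \<tau>]) (auto simp: apply_iso_def map_term_ctxt_apply)
qed

lemma rules_vars_subset_if_is_trs:
  "is_trs R \<Longrightarrow> \<forall>(l, r) \<in> rules R. vars_term l \<subseteq> vars R \<and> vars_term r \<subseteq> vars R"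
  unfolding is_trs_def by (fastforce dest: vars_term_subset_if_wf_term)

lemma local_iso_nth:
  assumes "local_iso R R' rs phis" "i < length rs"
  shows "rs ! i \<in> rules R"
    and "term_iso (funs R) (arity R) (vars R) (funs R') (arity R') (vars R') (phis ! i)"
    and "(apply_iso (phis ! i) (fst (rs ! i)), apply_iso (phis ! i) (snd (rs ! i))) \<in> rules R'"
  using assms unfolding local_iso_def enumerates_def by auto

lemma local_iso_transfer_i:
  assumes trs: "is_trs R" and li: "local_iso R R' rs phis"
  shows "transfer_i R R' rs phis"
  unfolding transfer_i_def
proof (intro allI impI)
  fix s t assume "rstep R s t"
  then obtain l r where lr: "(l, r) \<in> rules R"
    and step: "rstep_rules (funs R) (arity R) (vars R) {(l, r)} s t"
    unfolding rstep_def rstep_rules_def by blast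
  obtain i where i: "i < length rs" "rs ! i = (l, r)"
    using lr li unfolding local_iso_def enumerates_def by (metis in_set_conv_nth)
  have "rstep_rules (funs R') (arity R') (vars R')
          {(apply_iso (phis ! i) l, apply_iso (phis ! i) r)}
          (apply_iso (phis ! i) s) (apply_iso (phis ! i) t)"
    using rstep_rules_apply_iso[OF local_iso_nth(2)[OF li i(1)] _ step]
      rules_vars_subset_if_is_trs[OF trs] lr by fastforce
  then have "rstep R' (apply_iso (phis ! i) s) (apply_iso (phis ! i) t)"
    unfolding rstep_def using local_iso_nth(3)[OF li i(1)] i(2)
    by (auto intro: rstep_rules_mono)
  then show "\<exists>i<length rs. rstep R' (apply_iso (phis ! i) s) (apply_iso (phis ! i) t)"
    using i(1) by blast
qed

lemma local_iso_transfer_ii: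
  assumes trs: "is_trs R" and li: "local_iso R R' rs phis"
  shows "transfer_ii R R' rs phis"
  unfolding transfer_ii_def
proof (intro allI impI)
  fix s t i
  assume s: "in_terms s R" and t: "in_terms t R" and i: "i < length rs"
  obtain l r where lr: "rs ! i = (l, r)" by fastforce
  define \<phi> where "\<phi> = phis ! i"
  define \<psi> where "\<psi> = iso_inv (funs R) (vars R) \<phi>"
  have iso: "term_iso (funs R) (arity R) (vars R) (funs R') (arity R') (vars R') \<phi>"
    using local_iso_nth(2)[OF li i] by (simp add: \<phi>_def)
  have lr_R: "(l, r) \<in> rules R"
    using local_iso_nth(1)[OF li i] lr by simp
  then have l: "in_terms l R" and r: "in_terms r R"
    using trs unfolding is_trs_def by auto
  have rule_vars: "\<forall>(l', r') \<in> {(apply_iso \<phi> l, apply_iso \<phi> r)}.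
      vars_term l' \<subseteq> vars R' \<and> vars_term r' \<subseteq> vars R'"
    using vars_term_apply_iso_subset[OF iso] vars_term_subset_if_wf_term[OF l]
      vars_term_subset_if_wf_term[OF r] by simp
  assume "rstep_rules (funs R') (arity R') (vars R')
          {(apply_iso (phis ! i) (fst (rs ! i)), apply_iso (phis ! i) (snd (rs ! i)))}
          (apply_iso (phis ! i) s) (apply_iso (phis ! i) t)"
  then have "rstep_rules (funs R') (arity R') (vars R') {(apply_iso \<phi> l, apply_iso \<phi> r)}
      (apply_iso \<phi> s) (apply_iso \<phi> t)"
    by (simp add: lr \<phi>_def)
  from rstep_rules_apply_iso[OF term_iso_iso_inv[OF iso] rule_vars this]
  have "rstep_rules (funs R) (arity R) (vars R)
      {(apply_iso \<psi> (apply_iso \<phi> l), apply_iso \<psi> (apply_iso \<phi> r))}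
      (apply_iso \<psi> (apply_iso \<phi> s)) (apply_iso \<psi> (apply_iso \<phi> t))"
    by (simp add: \<psi>_def)
  then have "rstep_rules (funs R) (arity R) (vars R) {(l, r)} s t"
    by (simp only: \<psi>_def apply_iso_inv_apply_iso[OF iso] s t l r)
  then show "rstep R s t"
    unfolding rstep_def using lr_R by (auto intro: rstep_rules_mono)
qed

definition tm_a :: "(nat, nat) term" where "tm_a = Fun 0 []"
definition tm_b :: "(nat, nat) term" where "tm_b = Fun 1 []"
definition tm_fb :: "(nat, nat) term" where "tm_fb = Fun 2 [tm_b]"
definition ar_ex :: "nat \<Rightarrow> nat" where "ar_ex n = (if n = 2 then 1 else 0)"

definition R_ex :: "(nat, nat) trs" where
  "R_ex = ({0, 1, 2}, ar_ex, {}, {(tm_a, tm_fb), (tm_a, tm_b)})"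

definition R_ex' :: "(nat, nat) trs" where
  "R_ex' = ({0, 1, 2}, ar_ex, {}, {(tm_a, tm_fb), (tm_b, tm_a)})"

definition swap_ab :: "nat \<Rightarrow> nat" where
  "swap_ab n = (if n = 0 then 1 else if n = 1 then 0 else n)"

definition rs_ex :: "(nat, nat) rule list" where "rs_ex = [(tm_a, tm_fb), (tm_a, tm_b)]"
definition phis_ex :: "(nat, nat, nat, nat) tiso list" where "phis_ex = [(id, id), (swap_ab, id)]"

lemmas ex_defs = tm_a_def tm_b_def tm_fb_def ar_ex_def R_ex_def R_ex'_def
  funs_def arity_def vars_def rules_def

lemma is_trs_R_ex: "is_trs R_ex"
  by (simp add: is_trs_def ex_defs)

lemma is_trs_R_ex': "is_trs R_ex'"
  by (simp add: is_trs_def ex_defs)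

lemma iso_LFE_via_R_ex: "iso_LFE_via R_ex R_ex' rs_ex phis_ex"
proof -
  have isos: "term_iso {0, 1, 2} ar_ex {} {0, 1, 2} ar_ex {} (id, id)"
    "term_iso {0, 1, 2} ar_ex {} {0, 1, 2} ar_ex {} (swap_ab, id)"
    by (auto simp: term_iso_def swap_ab_def ar_ex_def bij_betw_def inj_on_def)
  have two: "{f i | i. i < Suc (Suc 0)} = {f 0, f 1}" for f :: "nat \<Rightarrow> (nat, nat) rule"
    by (auto simp: less_Suc_eq)
  have length_rs_ex: "length rs_ex = Suc (Suc 0)"
    by (simp add: rs_ex_def)
  have "{(apply_iso (phis_ex ! i) (fst (rs_ex ! i)), apply_iso (phis_ex ! i) (snd (rs_ex ! i))) | i.
      i < length rs_ex} = rules R_ex'"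
    unfolding two[folded length_rs_ex]
    by (simp add: rs_ex_def phis_ex_def apply_iso_def swap_ab_def ex_defs term.map_id)
  then have "local_iso R_ex R_ex' rs_ex phis_ex"
    unfolding local_iso_def enumerates_def
    using isos by (auto simp: rs_ex_def phis_ex_def ex_defs less_Suc_eq)
  moreover have "F_normal_form R_ex" "F_normal_form R_ex'"
    by (auto simp: F_normal_form_def F_equivalent_rules_def ex_defs apply_iso_def)
  ultimately show ?thesis
    by (simp add: iso_LFE_via_def V_invariant_def R_ex_def R_ex'_def vars_def)
qed

lemma Fun_const_eq_ctxt_apply: "Fun f [] = ctxt_apply C t \<longleftrightarrow> C = Hole \<and> t = Fun f []"
  by (cases C) auto

lemma rstep_R_ex_a_b: "rstep R_ex tm_a tm_b"
  unfolding rstep_def by (rule rstep_rules_rule_in_ctxt[of _ _ _ Hole, simplified]) (simp add: ex_defs)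

lemma not_rstep_R_ex'_a_b: "\<not> rstep R_ex' tm_a tm_b"
  by (auto simp: rstep_def rstep_rules_def ex_defs Fun_const_eq_ctxt_apply)

lemma rstep_R_ex'_b_a: "rstep R_ex' tm_b tm_a"
  unfolding rstep_def by (rule rstep_rules_rule_in_ctxt[of _ _ _ Hole, simplified]) (simp add: ex_defs)

lemma not_rstep_R_ex_b_a: "\<not> rstep R_ex tm_b tm_a"
  by (auto simp: rstep_def rstep_rules_def ex_defs Fun_const_eq_ctxt_apply)

lemma terminating_if_measure_decreases:
  fixes m :: "('f, 'v) term \<Rightarrow> nat"
  assumes "\<And>s t. rstep R s t \<Longrightarrow> m t < m s"
  shows "terminating R"
  unfolding terminating_def
proof
  assume "\<exists>seq :: nat \<Rightarrow> ('f, 'v) term. \<forall>k. rstep R (seq k) (seq (Suc k))"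
  then obtain seq :: "nat \<Rightarrow> ('f, 'v) term" where seq: "\<And>k. rstep R (seq k) (seq (Suc k))"
    by blast
  have "m (seq k) + k \<le> m (seq 0)" for k
  proof (induction k)
    case (Suc k)
    then show ?case
      using assms[OF seq, of k] by simp
  qed simp
  from this[of "Suc (m (seq 0))"] show False by simp
qed

fun count_a :: "(nat, nat) term \<Rightarrow> nat" where
  "count_a (Var x) = 0"
| "count_a (Fun f ts) = (if f = 0 then 1 else 0) + sum_list (map count_a ts)"

lemma count_a_ctxt_apply_less:
  "count_a t' < count_a t \<Longrightarrow> count_a (ctxt_apply C t') < count_a (ctxt_apply C t)"
  by (induction C) auto

lemma terminating_R_ex: "terminating R_ex"
  by (rule terminating_if_measure_decreases[where m = count_a])
    (auto simp: rstep_def rstep_rules_def ex_defs intro!: count_a_ctxt_apply_less)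

fun f_ctxt :: "nat \<Rightarrow> (nat, nat) ctxt" where
  "f_ctxt 0 = Hole"
| "f_ctxt (Suc n) = More 2 [] (f_ctxt n) []"

lemma wf_ctxt_f_ctxt: "wf_ctxt {0, 1, 2} ar_ex {} (f_ctxt n)"
  by (induction n) (auto simp: ar_ex_def)

lemma Fun_2_ctxt_apply_f_ctxt: "Fun 2 [ctxt_apply (f_ctxt n) t] = ctxt_apply (f_ctxt n) (Fun 2 [t])"
  by (induction n) auto

lemma not_terminating_R_ex': "\<not> terminating R_ex'"
proof -
  define seq where "seq k = ctxt_apply (f_ctxt (k div 2)) (if even k then tm_b else tm_a)" for k
  have step: "rstep R_ex' (ctxt_apply (f_ctxt n) l) (ctxt_apply (f_ctxt n) r)"
    if "(l, r) \<in> rules R_ex'" for n l r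
    using rstep_rules_rule_in_ctxt[OF _ that] wf_ctxt_f_ctxt
    by (simp add: rstep_def R_ex'_def funs_def arity_def vars_def)
  have "rstep R_ex' (seq k) (seq (Suc k))" for k
  proof (cases "even k")
    case True
    then show ?thesis
      using step[of tm_b tm_a "k div 2"] by (simp add: seq_def R_ex'_def rules_def)
  next
    case False
    then have "seq (Suc k) = ctxt_apply (f_ctxt (k div 2)) tm_fb"
      by (auto simp: seq_def tm_fb_def Fun_2_ctxt_apply_f_ctxt elim!: oddE)
    then show ?thesis
      using False step[of tm_a tm_fb "k div 2"] by (simp add: seq_def R_ex'_def rules_def)
  qed
  then show ?thesis
    unfolding terminating_def by blast
qed

lemma local_iso_step_not_preserved:
  "\<exists>(Q :: (nat, nat) trs) (Q' :: (nat, nat) trs) rs phis s t i.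
     is_trs Q \<and> is_trs Q' \<and> iso_LFE_via Q Q' rs phis \<and>
     in_terms s Q \<and> in_terms t Q \<and> i < length rs \<and>
     rstep Q s t \<and> \<not> rstep Q' (apply_iso (phis ! i) s) (apply_iso (phis ! i) t)"
proof -
  have "in_terms tm_a R_ex" "in_terms tm_b R_ex" "0 < length rs_ex"
    "apply_iso (phis_ex ! 0) tm_a = tm_a" "apply_iso (phis_ex ! 0) tm_b = tm_b"
    by (simp_all add: ex_defs rs_ex_def phis_ex_def apply_iso_def term.map_id)
  then show ?thesis
    using is_trs_R_ex is_trs_R_ex' iso_LFE_via_R_ex rstep_R_ex_a_b not_rstep_R_ex'_a_b by metis
qed

lemma local_iso_step_not_reflected:
  "\<exists>(Q :: (nat, nat) trs) (Q' :: (nat, nat) trs) rs phis s t j.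
     is_trs Q \<and> is_trs Q' \<and> iso_LFE_via Q Q' rs phis \<and>
     in_terms s Q \<and> in_terms t Q \<and> j < length rs \<and>
     rstep Q' (apply_iso (phis ! j) s) (apply_iso (phis ! j) t) \<and> \<not> rstep Q s t"
proof -
  have "in_terms tm_a R_ex" "in_terms tm_b R_ex" "0 < length rs_ex"
    "apply_iso (phis_ex ! 0) tm_a = tm_a" "apply_iso (phis_ex ! 0) tm_b = tm_b"
    by (simp_all add: ex_defs rs_ex_def phis_ex_def apply_iso_def term.map_id)
  then show ?thesis
    using is_trs_R_ex is_trs_R_ex' iso_LFE_via_R_ex rstep_R_ex'_b_a not_rstep_R_ex_b_a by metis
qed

lemma iso_LFE_termination_not_preserved:
  "\<exists>(Q :: (nat, nat) trs) (Q' :: (nat, nat) trs).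
     is_trs Q \<and> is_trs Q' \<and> iso_LFE Q Q' \<and> terminating Q \<and> \<not> terminating Q'"
  using is_trs_R_ex is_trs_R_ex' iso_LFE_via_R_ex terminating_R_ex not_terminating_R_ex'
  unfolding iso_LFE_def by blast

theorem mainTheorem6:
  fixes R :: "('f, 'v) trs" and R1 :: "('g, 'w) trs" and R2 :: "('g, 'v) trs"
  shows
    \<comment> \<open>(i) and (ii), positive parts, for each of the three notions\<close>
    "(\<forall>rs phis. is_trs R \<and> is_trs R1 \<and> (iso_LE_via R R1 rs phis \<or> iso_SVE_via R R1 rs phis)
        \<longrightarrow> transfer_i R R1 rs phis \<and> transfer_ii R R1 rs phis)
   \<and> (\<forall>rs phis. is_trs R \<and> is_trs R2 \<and> iso_LFE_via R R2 rs phis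
        \<longrightarrow> transfer_i R R2 rs phis \<and> transfer_ii R R2 rs phis)
   \<and> \<comment> \<open>(i), counterexample\<close>
     (\<exists>(Q :: (nat, nat) trs) (Q' :: (nat, nat) trs) rs phis s t i.
        is_trs Q \<and> is_trs Q' \<and> iso_LFE_via Q Q' rs phis \<and>
        in_terms s Q \<and> in_terms t Q \<and> i < length rs \<and>
        rstep Q s t \<and> \<not> rstep Q' (apply_iso (phis ! i) s) (apply_iso (phis ! i) t))
   \<and> \<comment> \<open>(ii), counterexample\<close>
     (\<exists>(Q :: (nat, nat) trs) (Q' :: (nat, nat) trs) rs phis s t j.
        is_trs Q \<and> is_trs Q' \<and> iso_LFE_via Q Q' rs phis \<and>
        in_terms s Q \<and> in_terms t Q \<and> j < length rs \<and>
        rstep Q' (apply_iso (phis ! j) s) (apply_iso (phis ! j) t) \<and> \<not> rstep Q s t)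
   \<and> \<comment> \<open>(iii)\<close>
     (\<exists>(Q :: (nat, nat) trs) (Q' :: (nat, nat) trs).
        is_trs Q \<and> is_trs Q' \<and> iso_LFE Q Q' \<and> terminating Q \<and> \<not> terminating Q')"
proof (intro conjI allI impI)
  fix rs phis
  assume "is_trs R \<and> is_trs R1 \<and> (iso_LE_via R R1 rs phis \<or> iso_SVE_via R R1 rs phis)"
  then show "transfer_i R R1 rs phis" "transfer_ii R R1 rs phis"
    by (auto simp: iso_LE_via_def iso_SVE_via_def intro: local_iso_transfer_i local_iso_transfer_ii)
next
  fix rs phis
  assume "is_trs R \<and> is_trs R2 \<and> iso_LFE_via R R2 rs phis"
  then show "transfer_i R R2 rs phis" "transfer_ii R R2 rs phis"
    by (auto simp: iso_LFE_via_def intro: local_iso_transfer_i local_iso_transfer_ii)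
qed (fact local_iso_step_not_preserved local_iso_step_not_reflected
      iso_LFE_termination_not_preserved)+

end
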